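(* Let $\Gamma$ be a group and $S$ a $\Gamma$-graded semigroup. Then there is a $\Gamma$-graded pointed set $X$ and an injective semigroup homomorphism $\psi:S\to\mathcal{T}^{\mathrm{gr}}(X)$ such that $\psi(S_\alpha)\subseteq\mathcal{T}(X)_\alpha$ for all $\alpha\in\Gamma$.
   Context: Semigroups have a zero; $S$ is $\Gamma$-graded via $\deg:S\setminus\{0\}\to\Gamma$ with $\deg(st)=\deg(s)\deg(t)$ when $st\neq0$, $S_\alpha=\deg^{-1}(\alpha)\cup\{0\}$. A pointed set $X$ (with distinguished $0_X$) is $\Gamma$-graded if there is a map $\phi:X\setminus\{0_X\}\to\Gamma$; $X_\alpha=\phi^{-1}(\alpha)\cup\{0_X\}$. $\mathcal T'(X)$ is the semigroup under composition of all maps $X\to X$ fixing $0_X$, with zero the constant map to $0_X$. $\mathcal T(X)_\alpha=\{\psi\in\mathcal T'(X):\psi(X_\beta)\subseteq X_{\alpha\beta}\text{ for all }\beta\in\Gamma\}$ and $\mathcal T^{\mathrm{gr}}(X)=\bigcup_{\alpha}\mathcal T(X)_\alpha$, a $\Gamma$-graded subsemigroup of $\mathcal T'(X)$ with components $\mathcal T(X)_\alpha$. *)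

theory Defs
  imports "HOL-Algebra.Group" "HOL-Library.FuncSet"
begin

definition semigroup0 :: "'s set \<Rightarrow> ('s \<Rightarrow> 's \<Rightarrow> 's) \<Rightarrow> 's \<Rightarrow> bool" where
  "semigroup0 S m z \<longleftrightarrow>
     z \<in> S \<and>
     (\<forall>s\<in>S. \<forall>t\<in>S. m s t \<in> S) \<and>
     (\<forall>s\<in>S. \<forall>t\<in>S. \<forall>u\<in>S. m (m s t) u = m s (m t u)) \<and>
     (\<forall>s\<in>S. m z s = z \<and> m s z = z)"

definition graded_semigroup ::
  "('g, 'b) monoid_scheme \<Rightarrow> 's set \<Rightarrow> ('s \<Rightarrow> 's \<Rightarrow> 's) \<Rightarrow> 's \<Rightarrow> ('s \<Rightarrow> 'g) \<Rightarrow> bool" where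
  "graded_semigroup G S m z deg \<longleftrightarrow>
     semigroup0 S m z \<and>
     (\<forall>s\<in>S - {z}. deg s \<in> carrier G) \<and>
     (\<forall>s\<in>S - {z}. \<forall>t\<in>S - {z}. m s t \<noteq> z \<longrightarrow> deg (m s t) = deg s \<otimes>\<^bsub>G\<^esub> deg t)"

definition graded_comp :: "'s set \<Rightarrow> 's \<Rightarrow> ('s \<Rightarrow> 'g) \<Rightarrow> 'g \<Rightarrow> 's set" where
  "graded_comp S z deg \<alpha> = {s \<in> S - {z}. deg s = \<alpha>} \<union> {z}"

definition graded_pointed_set ::
  "('g, 'b) monoid_scheme \<Rightarrow> 'x set \<Rightarrow> 'x \<Rightarrow> ('x \<Rightarrow> 'g) \<Rightarrow> bool" where
  "graded_pointed_set G X x0 \<phi> \<longleftrightarrow> x0 \<in> X \<and> (\<forall>x\<in>X - {x0}. \<phi> x \<in> carrier G)"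

definition Tprime :: "'x set \<Rightarrow> 'x \<Rightarrow> ('x \<Rightarrow> 'x) set" where
  "Tprime X x0 = {f \<in> X \<rightarrow>\<^sub>E X. f x0 = x0}"

definition Tzero :: "'x set \<Rightarrow> 'x \<Rightarrow> ('x \<Rightarrow> 'x)" where
  "Tzero X x0 = (\<lambda>x\<in>X. x0)"

definition Tcomp ::
  "('g, 'b) monoid_scheme \<Rightarrow> 'x set \<Rightarrow> 'x \<Rightarrow> ('x \<Rightarrow> 'g) \<Rightarrow> 'g \<Rightarrow> ('x \<Rightarrow> 'x) set" where
  "Tcomp G X x0 \<phi> \<alpha> = {f \<in> Tprime X x0.
      \<forall>\<beta>\<in>carrier G. f ` (graded_comp X x0 \<phi> \<beta>) \<subseteq> graded_comp X x0 \<phi> (\<alpha> \<otimes>\<^bsub>G\<^esub> \<beta>)}"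

definition Tgr ::
  "('g, 'b) monoid_scheme \<Rightarrow> 'x set \<Rightarrow> 'x \<Rightarrow> ('x \<Rightarrow> 'g) \<Rightarrow> ('x \<Rightarrow> 'x) set" where
  "Tgr G X x0 \<phi> = (\<Union>\<alpha>\<in>carrier G. Tcomp G X x0 \<phi> \<alpha>)"

end

theory Submission
  imports Defs
begin

text \<open>
  This is the Cayley representation. Adjoin an identity to S and let s act on the result by left
  multiplication, with z as base point. Grading each nonzero s by deg s and the adjoined identity by
  the unit of the group makes left multiplication by s homogeneous of degree deg s: a product s t
  can only be nonzero if s and t are, and then deg (s t) = deg s deg t. The action is faithful
  because s is recovered as the image of the adjoined identity.
\<close>

definition cayley_space :: "'s set \<Rightarrow> 'e \<Rightarrow> ('s option \<times> 'e) set" where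
  "cayley_space S e = (Some ` S \<union> {None}) \<times> {e}"
  \<comment> \<open>None is the adjoined identity; the constant tag e only fits the carrier type of the theorem.\<close>

definition cayley_map ::
  "'s set \<Rightarrow> ('s \<Rightarrow> 's \<Rightarrow> 's) \<Rightarrow> 'e \<Rightarrow> 's \<Rightarrow> 's option \<times> 'e \<Rightarrow> 's option \<times> 'e" where
  "cayley_map S m e s =
     (\<lambda>p\<in>cayley_space S e. (Some (case fst p of None \<Rightarrow> s | Some t \<Rightarrow> m s t), e))"

definition cayley_grading :: "('g, 'b) monoid_scheme \<Rightarrow> ('s \<Rightarrow> 'g) \<Rightarrow> 's option \<times> 'e \<Rightarrow> 'g" where
  "cayley_grading G deg p = (case fst p of None \<Rightarrow> \<one>\<^bsub>G\<^esub> | Some s \<Rightarrow> deg s)"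

lemma cayley_space_iff:
  "p \<in> cayley_space S e \<longleftrightarrow> snd p = e \<and> (fst p = None \<or> (\<exists>s\<in>S. fst p = Some s))"
  by (cases p) (auto simp: cayley_space_def)

lemma cayley_map_in_Tprime:
  assumes "semigroup0 S m z" and "s \<in> S"
  shows "cayley_map S m e s \<in> Tprime (cayley_space S e) (Some z, e)"
  using assms unfolding semigroup0_def Tprime_def cayley_map_def
  by (auto simp: cayley_space_iff split: option.split)

lemma cayley_map_mult:
  assumes "semigroup0 S m z" and "s \<in> S" and "t \<in> S"
  shows "cayley_map S m e (m s t) = compose (cayley_space S e) (cayley_map S m e s) (cayley_map S m e t)"
  unfolding compose_def cayley_map_def
  by (rule ext) (use assms in \<open>auto simp: semigroup0_def cayley_space_iff split: option.split\<close>)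

lemma cayley_map_zero:
  assumes "semigroup0 S m z"
  shows "cayley_map S m e z = Tzero (cayley_space S e) (Some z, e)"
  unfolding Tzero_def cayley_map_def
  by (rule restrict_ext) (use assms in \<open>auto simp: semigroup0_def cayley_space_iff split: option.split\<close>)

lemma inj_on_cayley_map: "inj_on (cayley_map S m e) S"
proof (rule inj_onI)
  fix s t assume "cayley_map S m e s = cayley_map S m e t"
  then have "cayley_map S m e s (None, e) = cayley_map S m e t (None, e)" by simp
  then show "s = t" by (simp add: cayley_map_def cayley_space_def)
qed

lemma graded_pointed_set_cayley_space:
  assumes "monoid G" and "graded_semigroup G S m z deg"
  shows "graded_pointed_set G (cayley_space S e) (Some z, e) (cayley_grading G deg)"
proof -
  have "cayley_grading G deg p \<in> carrier G" if "p \<in> cayley_space S e" "p \<noteq> (Some z, e)" for p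
    using that assms unfolding graded_semigroup_def
    by (auto simp: cayley_space_def cayley_grading_def monoid.one_closed)
  moreover have "(Some z, e) \<in> cayley_space S e"
    using assms(2) by (simp add: graded_semigroup_def semigroup0_def cayley_space_def)
  ultimately show ?thesis unfolding graded_pointed_set_def by blast
qed

lemma Tzero_in_Tcomp:
  assumes "x0 \<in> X"
  shows "Tzero X x0 \<in> Tcomp G X x0 \<phi> \<alpha>"
  using assms unfolding Tcomp_def Tprime_def Tzero_def graded_comp_def by auto

lemma TcompI:
  assumes "f \<in> Tprime X x0"
    and "\<And>x. x \<in> X \<Longrightarrow> x \<noteq> x0 \<Longrightarrow> f x \<noteq> x0 \<Longrightarrow> \<phi> (f x) = \<alpha> \<otimes>\<^bsub>G\<^esub> \<phi> x"
  shows "f \<in> Tcomp G X x0 \<phi> \<alpha>"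
  using assms unfolding Tcomp_def Tprime_def graded_comp_def by fastforce

lemma cayley_grading_cayley_map:
  assumes "monoid G" and "graded_semigroup G S m z deg"
    and "s \<in> S" and "p \<in> cayley_space S e" and "p \<noteq> (Some z, e)"
    and "cayley_map S m e s p \<noteq> (Some z, e)"
  shows "cayley_grading G deg (cayley_map S m e s p) = deg s \<otimes>\<^bsub>G\<^esub> cayley_grading G deg p"
proof -
  from assms(4) consider "p = (None, e)" | t where "t \<in> S" and "p = (Some t, e)"
    by (cases p) (auto simp: cayley_space_iff)
  then show ?thesis
  proof cases
    case 1
    with assms(1-3,6) show ?thesis
      unfolding graded_semigroup_def
      by (auto simp: cayley_map_def cayley_space_def cayley_grading_def monoid.r_one)
  next
    case (2 t)
    with assms(5,6) have "t \<noteq> z" and "m s t \<noteq> z"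
      by (auto simp: cayley_map_def cayley_space_def)
    moreover have "s \<noteq> z"
      using assms(2) \<open>t \<in> S\<close> \<open>m s t \<noteq> z\<close> unfolding graded_semigroup_def semigroup0_def by auto
    ultimately show ?thesis
      using 2 assms(2,3) unfolding graded_semigroup_def
      by (auto simp: cayley_map_def cayley_space_def cayley_grading_def)
  qed
qed

lemma cayley_map_in_Tcomp:
  assumes "monoid G" and "graded_semigroup G S m z deg" and "s \<in> graded_comp S z deg \<alpha>"
  shows "cayley_map S m e s \<in> Tcomp G (cayley_space S e) (Some z, e) (cayley_grading G deg) \<alpha>"
proof -
  have sg: "semigroup0 S m z" and "z \<in> S"
    using assms(2) unfolding graded_semigroup_def semigroup0_def by auto
  show ?thesis
  proof (cases "s = z")
    case True
    then show ?thesis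
      using \<open>z \<in> S\<close> by (simp add: cayley_map_zero[OF sg] Tzero_in_Tcomp cayley_space_def)
  next
    case False
    with assms(3) have "s \<in> S" and "deg s = \<alpha>" by (auto simp: graded_comp_def)
    show ?thesis
    proof (rule TcompI)
      show "cayley_map S m e s \<in> Tprime (cayley_space S e) (Some z, e)"
        using sg \<open>s \<in> S\<close> by (rule cayley_map_in_Tprime)
    next
      fix p assume "p \<in> cayley_space S e" "p \<noteq> (Some z, e)" "cayley_map S m e s p \<noteq> (Some z, e)"
      from cayley_grading_cayley_map[OF assms(1,2) \<open>s \<in> S\<close> this]
      show "cayley_grading G deg (cayley_map S m e s p) = \<alpha> \<otimes>\<^bsub>G\<^esub> cayley_grading G deg p"
        by (simp only: \<open>deg s = \<alpha>\<close>)
    qed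
  qed
qed

lemma graded_comp_cover:
  assumes "monoid G" and "graded_semigroup G S m z deg" and "s \<in> S"
  obtains \<alpha> where "\<alpha> \<in> carrier G" and "s \<in> graded_comp S z deg \<alpha>"
proof (cases "s = z")
  case True
  then show ?thesis using that[of "\<one>\<^bsub>G\<^esub>"] assms(1) by (simp add: graded_comp_def monoid.one_closed)
next
  case False
  then show ?thesis
    using that[of "deg s"] assms(2,3) unfolding graded_semigroup_def graded_comp_def by auto
qed

theorem proposition2p5:
  fixes G :: "('g, 'b) monoid_scheme"
    and S :: "'s set" and m :: "'s \<Rightarrow> 's \<Rightarrow> 's" and z :: 's and deg :: "'s \<Rightarrow> 'g"
  assumes "group G"
    and "graded_semigroup G S m z deg"
  shows "\<exists>(X :: ('s option \<times> 'g) set) x0 \<phi> \<psi>.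
           graded_pointed_set G X x0 \<phi> \<and>
           (\<forall>s\<in>S. \<psi> s \<in> Tgr G X x0 \<phi>) \<and>
           inj_on \<psi> S \<and>
           (\<forall>s\<in>S. \<forall>t\<in>S. \<psi> (m s t) = compose X (\<psi> s) (\<psi> t)) \<and>
           \<psi> z = Tzero X x0 \<and>
           (\<forall>\<alpha>\<in>carrier G. \<psi> ` (graded_comp S z deg \<alpha>) \<subseteq> Tcomp G X x0 \<phi> \<alpha>)"
proof -
  define X :: "('s option \<times> 'g) set" where "X = cayley_space S \<one>\<^bsub>G\<^esub>"
  define x0 where "x0 = (Some z, \<one>\<^bsub>G\<^esub>)"
  define \<phi> :: "'s option \<times> 'g \<Rightarrow> 'g" where "\<phi> = cayley_grading G deg"
  define \<psi> where "\<psi> = cayley_map S m \<one>\<^bsub>G\<^esub>"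
  have G: "monoid G" using assms(1) by (rule group.is_monoid)
  have S: "semigroup0 S m z" using assms(2) by (simp add: graded_semigroup_def)
  have comp: "\<psi> ` graded_comp S z deg \<alpha> \<subseteq> Tcomp G X x0 \<phi> \<alpha>" for \<alpha>
    unfolding X_def x0_def \<phi>_def \<psi>_def
    by (rule image_subsetI) (rule cayley_map_in_Tcomp[OF G assms(2)])
  have "\<psi> s \<in> Tgr G X x0 \<phi>" if "s \<in> S" for s
  proof -
    obtain \<alpha> where "\<alpha> \<in> carrier G" and "s \<in> graded_comp S z deg \<alpha>"
      using graded_comp_cover[OF G assms(2) \<open>s \<in> S\<close>] .
    with comp show ?thesis unfolding Tgr_def by blast
  qed
  moreover have "graded_pointed_set G X x0 \<phi>"
    unfolding X_def x0_def \<phi>_def using G assms(2) by (rule graded_pointed_set_cayley_space)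
  moreover have "inj_on \<psi> S"
    unfolding \<psi>_def by (rule inj_on_cayley_map)
  moreover have "\<psi> (m s t) = compose X (\<psi> s) (\<psi> t)" if "s \<in> S" "t \<in> S" for s t
    unfolding X_def \<psi>_def using S that by (rule cayley_map_mult)
  moreover have "\<psi> z = Tzero X x0"
    unfolding X_def x0_def \<psi>_def using S by (rule cayley_map_zero)
  ultimately show ?thesis using comp by blast
qed

end
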